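(* Let $q=2^n$ and $k\ge0$, and regard $D_k$ as a map ${\mathbb F}_q\to{\mathbb F}_q$. (i) $D_k(\mathcal T_1)=\{0\}$ iff $q+1$ divides $k$. If $q>2$, then $D_k(\mathcal T_0)=\{0\}$ iff $q-1$ divides $k$. (ii) $D_k(b)=b^2$ for all $b\in\mathcal T_1$ iff $k\equiv\pm2\pmod{q+1}$. If $q>2$, then $D_k(a)=a^2$ for all $a\in\mathcal T_0$ iff $k\equiv\pm2\pmod{q-1}$. (iii) Let $e\ge0$. If $e$ is even, then $D_{q^e-1}(a)=0$ and $D_{q^e+1}(a)=a^2$ for all $a\in{\mathbb F}_q$. If $e$ is odd, then $D_{q^e-1}(a)=0$ for $a\in\mathcal T_0\cup\{0\}$ and $=a^2$ for $a\in\mathcal T_1$, while $D_{q^e+1}(a)=a^2$ for $a\in\mathcal T_0\cup\{0\}$ and $=0$ for $a\in\mathcal T_1$.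
   Context: $D_k\in\mathbb Z[x]$: $D_0=2$, $D_1=x$, $D_{k+2}=xD_{k+1}-D_k$ (so $D_k(u+1/u)=u^k+u^{-k}$); over ${\mathbb F}_q$ with $q$ even, $D_0=0$. For $j\in\{0,1\}$, $\mathcal T_j=\{a\in{\mathbb F}_q^\times:\mathrm{Tr}_{{\mathbb F}_q/{\mathbb F}_2}(1/a)=j\}$. *)

theory Defs
  imports Main "HOL-Number_Theory.Cong" "HOL-Library.Cardinality"
begin

text \<open>Dickson polynomial D_k in Z[x], regarded as a map on a commutative ring
  (coefficients mapped via the canonical ring homomorphism):
  D_0 = 2, D_1 = x, D_(k+2) = x D_(k+1) - D_k.\<close>
fun dickson :: "nat \<Rightarrow> 'a::comm_ring_1 \<Rightarrow> 'a" where
  "dickson 0 x = 2"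
| "dickson (Suc 0) x = x"
| "dickson (Suc (Suc k)) x = x * dickson (Suc k) x - dickson k x"

definition abs_trace :: "nat \<Rightarrow> 'a::comm_ring_1 \<Rightarrow> 'a" where
  "abs_trace n x = (\<Sum>i<n. x ^ (2 ^ i))"

definition trace_set :: "nat \<Rightarrow> nat \<Rightarrow> 'a::field set" where
  "trace_set n j = {a. a \<noteq> 0 \<and> abs_trace n (inverse a) = of_nat j}"

end

theory Submission
  imports Defs "HOL-Computational_Algebra.Polynomial"
begin

text \<open>
  In characteristic 2 the recurrence reads D_{k+2} = x D_{k+1} + D_k, and D_{2m} = D_m^2, so
  D_{2^j}(x) = x^{2^j}; an induction on j then gives D_{q+1}(x) = x^2 (1 + Tr(1/x)) and
  D_{q-1}(x) = x^2 Tr(1/x). Hence for a in T_1 \<union> {0} the pair (D_k(a), D_{k+1}(a)) returns to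
  (D_0(a), D_1(a)) = (0, a) at k = q + 1, and for a in T_0 \<union> {0} at k = q - 1: the sequence is
  periodic and, running the recurrence backwards, symmetric under k \<mapsto> P - k. So D_k(a) only
  depends on \<plusminus>k modulo the period P, and k may be taken in [0, P/2].
  Since Tr is a polynomial of degree q/2 with Tr^2 = Tr, it takes each value q/2 times, so the set
  T_j \<union> {0} of period P = q \<plusminus> 1 has more than P/2 elements. As D_r is monic of degree r \<le> P/2,
  it vanishes (resp. equals x^2) on that set only for r = 0 (resp. r = 2).
\<close>

lemma power_card_eq_self:
  fixes x :: "'a::{field,finite}"
  shows "x ^ CARD('a) = x"
proof (cases "x = 0")
  case True
  then show ?thesis by simp
next
  case False
  let ?U = "UNIV - {0::'a}"
  have bij: "bij_betw (\<lambda>y. x * y) ?U ?U"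
  proof -
    have "y \<in> (\<lambda>y. x * y) ` ?U" if "y \<noteq> 0" for y
      using False that by (intro image_eqI[of _ _ "inverse x * y"]) auto
    then show ?thesis unfolding bij_betw_def inj_on_def using False by auto
  qed
  have "x ^ card ?U * (\<Prod>y\<in>?U. y) = (\<Prod>y\<in>?U. x * y)"
    by (simp add: prod.distrib)
  also have "\<dots> = (\<Prod>y\<in>?U. y)"
    using prod.reindex_bij_betw[OF bij, of "\<lambda>y. y"] by simp
  finally have "x ^ card ?U = 1" by simp
  moreover have "CARD('a) = Suc (card ?U)"
    using card_Diff_singleton[of 0 "UNIV :: 'a set"] by simp
  ultimately show ?thesis
    by (metis power_Suc2 mult_1)
qed

lemma char_two_if_card_two_power:
  assumes "CARD('a::{field,finite}) = 2 ^ n"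
  shows "(2::'a) = 0" and "0 < n"
proof -
  have "card {0::'a, 1} \<le> CARD('a)" by (rule card_mono) auto
  then show "0 < n" using assms by (cases n) auto
  then have "(-1::'a) ^ CARD('a) = 1" using assms by simp
  with power_card_eq_self[of "-1::'a"] show "(2::'a) = 0"
    by (metis add_eq_0_iff2 one_add_one)
qed

section \<open>Dickson polynomials\<close>

lemma dickson_cassini:
  "dickson (Suc m) x ^ 2 - x * dickson m x * dickson (Suc m) x + dickson m x ^ 2 = 4 - x ^ 2"
  by (induction m) (simp_all add: power2_eq_square algebra_simps)

lemma dickson_double: "dickson (2 * m) x = dickson m x ^ 2 - 2"
proof -
  have "dickson (2 * m) x = dickson m x ^ 2 - 2
      \<and> dickson (2 * m + 1) x = dickson m x * dickson (Suc m) x - x"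
  proof (induction m)
    case (Suc m)
    let ?a = "dickson m x" and ?b = "dickson (Suc m) x"
    have "dickson (2 * Suc m) x = x * dickson (2 * m + 1) x - dickson (2 * m) x"
      by (simp add: numeral_2_eq_2)
    also have "\<dots> = x * (?a * ?b - x) - (?a ^ 2 - 2)"
      using Suc.IH by simp
    also have "\<dots> = (?b ^ 2 - 2) + ((4 - x ^ 2) - (?b ^ 2 - x * ?a * ?b + ?a ^ 2))"
      by (simp add: algebra_simps power2_eq_square)
    also have "\<dots> = ?b ^ 2 - 2"
      using dickson_cassini[of m x] by simp
    finally have even: "dickson (2 * Suc m) x = dickson (Suc m) x ^ 2 - 2" .
    have "dickson (2 * Suc m + 1) x = x * dickson (2 * Suc m) x - dickson (2 * m + 1) x"
      by (simp add: numeral_2_eq_2)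
    also have "\<dots> = x * (?b ^ 2 - 2) - (?a * ?b - x)"
      using Suc.IH by (simp only: even)
    also have "\<dots> = ?b * (x * ?b - ?a) - x"
      by (simp add: power2_eq_square algebra_simps)
    finally show ?case
      using even by simp
  qed (simp add: power2_eq_square)
  then show ?thesis ..
qed

lemma poly_dickson: "poly (dickson k p) x = dickson k (poly p x)"
  by (induction k p rule: dickson.induct) simp_all

lemma degree_dickson_X: "degree (dickson k [:0, 1:] :: 'a::comm_ring_1 poly) \<le> k"
  and coeff_dickson_X: "0 < k \<Longrightarrow> coeff (dickson k [:0, 1:] :: 'a::comm_ring_1 poly) k = 1"
proof -
  have "degree (dickson k [:0, 1:] :: 'a poly) \<le> k
      \<and> (0 < k \<longrightarrow> coeff (dickson k [:0, 1:] :: 'a poly) k = 1)"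
  proof (induction k "[:0, 1:] :: 'a poly" rule: dickson.induct)
    case (3 k)
    let ?X = "[:0, 1:] :: 'a poly"
    have "degree (?X * dickson (Suc k) ?X) \<le> Suc (Suc k)"
      using "3" degree_mult_le[of ?X "dickson (Suc k) ?X"] by auto
    moreover have "coeff (dickson k ?X) (Suc (Suc k)) = 0"
      using "3" by (intro coeff_eq_0) auto
    ultimately show ?case
      using "3" by (auto intro: degree_diff_le)
  qed auto
  then show "degree (dickson k [:0, 1:] :: 'a poly) \<le> k"
    and "0 < k \<Longrightarrow> coeff (dickson k [:0, 1:] :: 'a poly) k = 1" by auto
qed

lemma cong_uminus_int_mod:
  assumes "0 < P"
  shows "[- int k = int (P - k mod P)] (mod int P)"
proof -
  have diff: "- int k - int (P - k mod P) = - ((int k - int k mod int P) + int P)"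
    using mod_less_divisor[OF assms, of k] by (simp add: of_nat_diff of_nat_mod)
  show ?thesis
    unfolding cong_iff_dvd_diff diff dvd_minus_iff by (intro dvd_add dvd_minus_mod dvd_refl)
qed

lemma exists_small_residue:
  assumes "0 < P"
  obtains r :: nat where "2 * r \<le> P" "[int k = int r] (mod int P) \<or> [int k = - int r] (mod int P)"
proof (cases "2 * (k mod P) \<le> P")
  case True
  moreover have "[int k = int (k mod P)] (mod int P)"
    by (simp add: cong_def of_nat_mod)
  ultimately show ?thesis using that by blast
next
  case False
  moreover have "[int k = - int (P - k mod P)] (mod int P)"
    using cong_uminus_int_mod[OF assms, of k]
      cong_minus_minus_iff[of "int k" "- int (P - k mod P)" "int P"] by simp
  ultimately show ?thesis using that[of "P - k mod P"] by auto
qed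

lemma cong_power_mod_pred: "[int q ^ e = 1] (mod int q - 1)"
  using cong_pow[of "int q" 1 "int q - 1" e] by (simp add: cong_iff_dvd_diff)

lemma cong_power_minus_one_mod_pred:
  assumes "0 < q"
  shows "[int (q ^ e - 1) = 0] (mod int (q - 1))"
  using cong_diff[OF cong_power_mod_pred[of q e] cong_refl[of 1]] assms
  by (simp add: of_nat_diff)

lemma cong_power_plus_one_mod_pred:
  assumes "0 < q"
  shows "[int (q ^ e + 1) = 2] (mod int (q - 1))"
  using cong_add[OF cong_power_mod_pred[of q e] cong_refl[of 1]] assms
  by (simp add: of_nat_diff add.commute)

lemma cong_power_mod_Suc:
  "[int q ^ e = (if even e then 1 else - 1)] (mod int q + 1)"
proof -
  have "[int q ^ e = (- 1) ^ e] (mod int q + 1)"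
    by (intro cong_pow) (simp add: cong_iff_dvd_diff)
  then show ?thesis by (cases "even e") simp_all
qed

lemma cong_power_minus_one_mod_Suc:
  assumes "0 < q"
  shows "[int (q ^ e - 1) = (if even e then 0 else - 2)] (mod int (q + 1))"
  using cong_diff[OF cong_power_mod_Suc[of q e] cong_refl[of 1]] assms
  by (auto simp: of_nat_diff add.commute)

lemma cong_power_plus_one_mod_Suc:
  "[int (q ^ e + 1) = (if even e then 2 else 0)] (mod int (q + 1))"
  using cong_add[OF cong_power_mod_Suc[of q e] cong_refl[of 1]]
  by (auto simp: add.commute)

section \<open>Dickson polynomials in characteristic 2\<close>

text \<open>In characteristic 2, where D_0 = 0, this says that P is a period of k \<mapsto> D_k(x).\<close>
definition dickson_period :: "nat \<Rightarrow> 'a::comm_ring_1 \<Rightarrow> bool" where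
  "dickson_period P x \<longleftrightarrow> 0 < P \<and> dickson P x = 0 \<and> dickson (Suc P) x = x"

context
  assumes two_eq_zero: "(2::'a::field) = 0"
begin

lemma add_self_char2: "a + a = (0::'a)"
  by (simp only: mult_2[symmetric] two_eq_zero mult_zero_left)

lemma uminus_char2: "- a = (a::'a)"
  by (rule minus_unique[OF add_self_char2])

lemma diff_char2: "a - b = a + (b::'a)"
  by (simp add: uminus_char2 flip: diff_conv_add_uminus)

lemma square_add_char2: "(a + b) ^ 2 = a ^ 2 + (b::'a) ^ 2"
  by (simp add: power2_sum two_eq_zero)

lemma square_sum_char2: "(\<Sum>i\<in>A. f i) ^ 2 = (\<Sum>i\<in>A. f i ^ 2 :: 'a)"
  by (induction A rule: infinite_finite_induct) (simp_all add: square_add_char2)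

lemma dickson_Suc_Suc_char2: "dickson (Suc (Suc k)) x = x * dickson (Suc k) x + dickson k (x::'a)"
  by (simp add: diff_char2)

lemma dickson_at_zero_char2: "dickson k (0::'a) = 0"
  by (induction k "0::'a" rule: dickson.induct) (simp_all add: two_eq_zero)

lemma dickson_two_char2: "dickson 2 x = (x::'a) ^ 2"
  by (simp add: numeral_2_eq_2 two_eq_zero power2_eq_square)

lemma dickson_double_char2: "dickson (2 * m) x = dickson m (x::'a) ^ 2"
  by (simp add: dickson_double two_eq_zero)

lemma dickson_two_power_char2: "dickson (2 ^ j) x = (x::'a) ^ 2 ^ j"
  by (induction j) (simp_all add: dickson_double_char2 mult.commute flip: power_mult)

lemma dickson_two_power_Suc_char2:
  assumes "x \<noteq> (0::'a)"
  shows "dickson (2 ^ j + 1) x = x ^ (2 ^ j + 1) * (1 + (\<Sum>i<j. inverse x ^ 2 ^ Suc i))"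
proof (induction j)
  case 0
  show ?case by (simp add: two_eq_zero power2_eq_square)
next
  case (Suc j)
  define W where "W j = 1 + (\<Sum>i<j. inverse x ^ 2 ^ Suc i)" for j
  define N :: nat where "N = 2 ^ Suc j"
  have "W j ^ 2 = 1 + (\<Sum>i<j. inverse x ^ 2 ^ Suc (Suc i))"
    by (simp add: W_def square_add_char2 square_sum_char2 mult.commute flip: power_mult)
  then have W_Suc: "W (Suc j) = W j ^ 2 + inverse x ^ 2"
    unfolding W_def by (simp only: sum.lessThan_Suc_shift) simp
  have "x * dickson (N + 1) x + x ^ N = dickson (2 * (2 ^ j + 1)) x"
    using dickson_Suc_Suc_char2[of N x] dickson_two_power_char2[of "Suc j" x]
    by (simp add: N_def)
  also have "\<dots> = (x ^ (2 ^ j + 1) * W j) ^ 2"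
    by (simp only: dickson_double_char2 Suc W_def)
  also have "\<dots> = x ^ (N + 2) * W j ^ 2"
    by (simp add: N_def power_mult_distrib power2_eq_square algebra_simps mult_2 flip: power_add)
  also have "\<dots> = x * (x ^ (N + 1) * W (Suc j)) + x ^ N"
    using assms by (simp add: W_Suc power2_eq_square field_simps two_eq_zero)
  finally show ?case
    using assms by (simp add: W_def N_def)
qed

lemma dickson_period_add:
  assumes "dickson_period P (x::'a)"
  shows "dickson (k + P) x = dickson k x"
proof -
  have "dickson (k + P) x = dickson k x \<and> dickson (Suc k + P) x = dickson (Suc k) x"
    using assms
    by (induction k) (simp_all add: dickson_period_def dickson_Suc_Suc_char2 two_eq_zero)
  then show ?thesis ..
qed

lemma dickson_period_mod:
  assumes "dickson_period P (x::'a)"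
  shows "dickson (k mod P) x = dickson k x"
proof -
  have "dickson (m * P + r) x = dickson r x" for m r
  proof (induction m)
    case (Suc m)
    have "dickson (Suc m * P + r) x = dickson ((m * P + r) + P) x"
      by (simp add: algebra_simps)
    also have "\<dots> = dickson (m * P + r) x"
      by (rule dickson_period_add[OF assms])
    finally show ?case using Suc by simp
  qed simp
  from this[of "k div P" "k mod P"] show ?thesis by simp
qed

lemma dickson_period_reflect:
  assumes period: "dickson_period P (x::'a)" and "j \<le> P"
  shows "dickson (P - j) x = dickson j x"
proof -
  have P: "0 < P" "dickson P x = 0" "dickson (Suc P) x = x"
    using period by (simp_all add: dickson_period_def)
  have "dickson (P - j) x = dickson j x \<and> dickson (P - Suc j) x = dickson (Suc j) x"
    if "j < P" for j
    using that
  proof (induction j)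
    case 0
    have "dickson (Suc P) x = dickson (P - 1) x"
      using P dickson_Suc_Suc_char2[of "P - 1" x] by (simp add: Suc_diff_1)
    then show ?case using P by (simp add: two_eq_zero)
  next
    case (Suc j)
    then have IH: "dickson (P - j) x = dickson j x" "dickson (P - Suc j) x = dickson (Suc j) x"
      by simp_all
    have "dickson (P - j) x = x * dickson (P - Suc j) x + dickson (P - Suc (Suc j)) x"
      using Suc.prems dickson_Suc_Suc_char2[of "P - Suc (Suc j)" x]
      by (simp add: Suc_diff_Suc)
    then have "dickson (P - Suc (Suc j)) x = dickson j x - x * dickson (Suc j) x"
      unfolding IH by simp
    then have "dickson (P - Suc (Suc j)) x = dickson (Suc (Suc j)) x"
      by (simp add: dickson_Suc_Suc_char2 diff_char2 add.commute)
    then show ?case using IH by simp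
  qed
  then show ?thesis
    using assms P by (cases "j = P") (simp_all add: two_eq_zero)
qed

lemma dickson_period_cong:
  assumes period: "dickson_period P (x::'a)"
    and cong: "[int k = int j] (mod int P) \<or> [int k = - int j] (mod int P)"
  shows "dickson k x = dickson j x"
proof -
  have "0 < P" using period by (simp add: dickson_period_def)
  have same_residue: "dickson k' x = dickson j' x" if "[int k' = int j'] (mod int P)" for k' j'
    using that dickson_period_mod[OF period, of k'] dickson_period_mod[OF period, of j']
    by (simp add: cong_def flip: of_nat_mod)
  from cong show ?thesis
  proof
    assume "[int k = - int j] (mod int P)"
    then have "dickson k x = dickson (P - j mod P) x"
      using cong_uminus_int_mod[OF \<open>0 < P\<close>, of j] by (intro same_residue) (rule cong_trans)
    also have "\<dots> = dickson (j mod P) x"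
      using \<open>0 < P\<close> by (intro dickson_period_reflect[OF period]) simp
    also have "\<dots> = dickson j x"
      by (rule dickson_period_mod[OF period])
    finally show ?thesis .
  qed (rule same_residue)
qed

lemma dickson_period_cong_zero:
  assumes "dickson_period P (x::'a)" and "[int k = 0] (mod int P)"
  shows "dickson k x = 0"
  using dickson_period_cong[OF assms(1), of k 0] assms(2) by (simp add: two_eq_zero)

lemma dickson_period_cong_two:
  assumes "dickson_period P (x::'a)" and "[int k = 2] (mod int P) \<or> [int k = - 2] (mod int P)"
  shows "dickson k x = x ^ 2"
  using dickson_period_cong[OF assms(1), of k 2] assms(2) by (simp add: dickson_two_char2)

lemma dickson_vanishes_on_iff:
  assumes period: "\<forall>x\<in>S. dickson_period P (x::'a)" and card: "P < 2 * card S"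
  shows "(\<forall>x\<in>S. dickson k x = 0) \<longleftrightarrow> P dvd k"
proof
  assume "P dvd k"
  then have "[int k = 0] (mod int P)" by (simp add: cong_0_iff)
  then show "\<forall>x\<in>S. dickson k x = 0"
    using period dickson_period_cong_zero by blast
next
  assume vanish: "\<forall>x\<in>S. dickson k x = 0"
  have "S \<noteq> {}" using card by auto
  then have "0 < P" using period by (auto simp: dickson_period_def)
  then obtain r where r: "2 * r \<le> P"
    and cong: "[int k = int r] (mod int P) \<or> [int k = - int r] (mod int P)"
    by (rule exists_small_residue)
  have "\<forall>x\<in>S. poly (dickson r [:0, 1:]) x = poly 0 x"
    using vanish period dickson_period_cong[OF _ cong] by (simp add: poly_dickson)
  moreover have "degree (dickson r [:0, 1:] :: 'a poly) < card S"
    using degree_dickson_X[of r, where 'a='a] r card by linarith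
  ultimately have "dickson r [:0, 1:] = (0 :: 'a poly)"
    by (intro poly_eqI_degree[of S]) auto
  then have "r = 0"
    using coeff_dickson_X[of r, where 'a='a] by (cases "r = 0") auto
  then show "P dvd k" using cong by (simp add: cong_0_iff)
qed

lemma dickson_X_eq_monom_two:
  assumes X: "dickson r [:0, 1:] = (monom 1 2 :: 'a poly)"
  shows "r = 2"
proof -
  have "r \<noteq> 0"
    using arg_cong[OF X, of "\<lambda>p. coeff p 2"] by (cases r) (auto simp: numeral_poly numeral_2_eq_2)
  then show "r = 2"
    using arg_cong[OF X, of "\<lambda>p. coeff p r"] coeff_dickson_X[of r, where 'a='a] by (auto split: if_splits)
qed

lemma dickson_eq_square_on_iff:
  assumes period: "\<forall>x\<in>S. dickson_period P (x::'a)" and card: "P < 2 * card S" and "3 \<le> P"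
  shows "(\<forall>x\<in>S. dickson k x = x ^ 2) \<longleftrightarrow> [int k = 2] (mod int P) \<or> [int k = - 2] (mod int P)"
proof
  assume "[int k = 2] (mod int P) \<or> [int k = - 2] (mod int P)"
  then show "\<forall>x\<in>S. dickson k x = x ^ 2"
    using period dickson_period_cong_two by blast
next
  assume square: "\<forall>x\<in>S. dickson k x = x ^ 2"
  obtain r where r: "2 * r \<le> P"
    and cong: "[int k = int r] (mod int P) \<or> [int k = - int r] (mod int P)"
    using \<open>3 \<le> P\<close> exists_small_residue[of P k] by auto
  have square_r: "\<forall>x\<in>S. dickson r x = x ^ 2"
    using square period dickson_period_cong[OF _ cong] by simp
  show "[int k = 2] (mod int P) \<or> [int k = - 2] (mod int P)"
  proof (cases "P = 3")
    case True
    have "\<not> S \<subseteq> {0}"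
    proof
      assume "S \<subseteq> {0}"
      then have "card S \<le> 1" using card_mono[of "{0}" S] by simp
      then show False using card True by simp
    qed
    then obtain x where "x \<in> S" "x \<noteq> 0" by auto
    then have "r \<noteq> 0" using square_r by (cases r) (auto simp: two_eq_zero)
    then have "r = 1" using r True by simp
    moreover have "[1 = - 2] (mod 3::int)" "[- 1 = 2] (mod 3::int)"
      by (simp_all add: cong_def)
    ultimately show ?thesis using cong True by (auto dest: cong_trans)
  next
    case False
    then have "2 < card S" "r < card S" using r card \<open>3 \<le> P\<close> by auto
    have "\<forall>x\<in>S. poly (dickson r [:0, 1:]) x = poly (monom 1 2) x"
      using square_r by (simp add: poly_dickson poly_monom)
    then have "dickson r [:0, 1:] = (monom 1 2 :: 'a poly)"
      using \<open>2 < card S\<close> \<open>r < card S\<close> degree_dickson_X[of r, where 'a='a]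
      by (intro poly_eqI_degree[of S]) (auto simp: degree_monom_eq)
    then have "r = 2" by (rule dickson_X_eq_monom_two)
    then show ?thesis using cong by simp
  qed
qed

lemma dickson_image_eq_zero_iff:
  assumes "T \<noteq> {}"
  shows "(\<lambda>x. dickson k x) ` T = {0} \<longleftrightarrow> (\<forall>x\<in>T \<union> {0}. dickson k (x::'a) = 0)"
  using assms by (auto simp: dickson_at_zero_char2)

lemma dickson_eq_square_insert_zero_iff:
  "(\<forall>x\<in>T. dickson k x = x ^ 2) \<longleftrightarrow> (\<forall>x\<in>T \<union> {0}. dickson k (x::'a) = x ^ 2)"
  by (auto simp: dickson_at_zero_char2)

end

section \<open>The absolute trace\<close>

lemma abs_trace_0 [simp]: "abs_trace n 0 = 0"
  by (simp add: abs_trace_def power_0_left)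

lemma poly_abs_trace: "poly (abs_trace n p) x = abs_trace n (poly p x)"
  by (simp add: abs_trace_def poly_sum)

lemma coeff_abs_trace_X:
  "coeff (abs_trace n [:0, 1:]) k = (\<Sum>i<n. if 2 ^ i = k then 1 else 0)"
  by (simp add: abs_trace_def coeff_sum monom_altdef[of 1, simplified, symmetric] coeff_monom)

lemma card_abs_trace_eq_le:
  assumes "0 < n"
  shows "card {c::'a::field. abs_trace n c = b} \<le> 2 ^ (n - 1)"
proof -
  define p :: "'a poly" where "p = abs_trace n [:0, 1:] - [:b:]"
  have top: "coeff p (2 ^ (n - 1)) = 1"
  proof -
    have "(\<Sum>i<n. if (2::nat) ^ i = 2 ^ (n - 1) then 1 else 0) = (\<Sum>i<n. if i = n - 1 then 1 else (0::'a))"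
      by (intro sum.cong refl) simp
    then show ?thesis
      using assms by (simp add: p_def coeff_abs_trace_X coeff_pCons split: nat.split)
  qed
  have "degree p \<le> 2 ^ (n - 1)"
  proof (rule degree_le, intro allI impI)
    fix k :: nat assume k: "2 ^ (n - 1) < k"
    have "2 ^ i \<noteq> k" if "i < n" for i
      using k power_increasing[of i "n - 1" "2::nat"] that by linarith
    then show "coeff p k = 0"
      using k by (simp add: p_def coeff_abs_trace_X coeff_pCons split: nat.split)
  qed
  moreover have "p \<noteq> 0" using top by auto
  then have "card {c. poly p c = 0} \<le> degree p" by (rule card_poly_roots_bound)
  ultimately show ?thesis by (simp add: p_def poly_abs_trace)
qed

lemma card_inverse_preimage: "card {a::'a::field. P (inverse a)} = card {c. P c}"
proof -
  have "{a::'a. P (inverse a)} = inverse ` {c. P c}"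
    by (auto intro: image_eqI[of _ inverse "inverse _"])
  then show ?thesis by (simp add: card_image inj_on_def)
qed

context
  fixes n :: nat
  assumes card: "CARD('a::{field,finite}) = 2 ^ n"
begin

lemmas two_eq_zero = char_two_if_card_two_power(1)[OF card]

lemma n_pos: "0 < n"
  using char_two_if_card_two_power(2)[OF card] .

lemma power_two_power_eq_self: "(c::'a) ^ 2 ^ n = c"
  using power_card_eq_self[of c] by (simp add: card)

lemma sum_power_two_power_Suc: "(\<Sum>i<n. (c::'a) ^ 2 ^ Suc i) = abs_trace n c"
proof -
  have "(\<Sum>i<Suc n. c ^ 2 ^ i) = c ^ 2 ^ 0 + (\<Sum>i<n. c ^ 2 ^ Suc i)"
    by (rule sum.lessThan_Suc_shift)
  moreover have "(\<Sum>i<Suc n. c ^ 2 ^ i) = abs_trace n c + c"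
    by (simp add: abs_trace_def power_two_power_eq_self)
  ultimately show ?thesis by simp
qed

lemma abs_trace_square: "abs_trace n (c::'a) ^ 2 = abs_trace n c"
proof -
  have "abs_trace n c ^ 2 = (\<Sum>i<n. (c ^ 2 ^ i) ^ 2)"
    by (simp only: abs_trace_def square_sum_char2[OF two_eq_zero])
  also have "\<dots> = (\<Sum>i<n. c ^ 2 ^ Suc i)"
    by (simp add: mult.commute flip: power_mult)
  finally show ?thesis by (simp only: sum_power_two_power_Suc)
qed

lemma abs_trace_eq_0_or_1: "abs_trace n (c::'a) = 0 \<or> abs_trace n c = 1"
proof -
  have "abs_trace n c * (abs_trace n c - 1) = 0"
    using abs_trace_square[of c] by (simp add: power2_eq_square algebra_simps)
  then show ?thesis by simp
qed

lemma dickson_card: "dickson (2 ^ n) (x::'a) = x"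
  by (simp add: dickson_two_power_char2[OF two_eq_zero] power_two_power_eq_self)

lemma dickson_card_Suc: "dickson (2 ^ n + 1) (x::'a) = x ^ 2 * (1 + abs_trace n (inverse x))"
proof (cases "x = 0")
  case True
  then show ?thesis by (simp add: dickson_at_zero_char2[OF two_eq_zero])
next
  case False
  have "dickson (2 ^ n + 1) x = x ^ (2 ^ n + 1) * (1 + (\<Sum>i<n. inverse x ^ 2 ^ Suc i))"
    by (rule dickson_two_power_Suc_char2[OF two_eq_zero False])
  then show ?thesis
    unfolding sum_power_two_power_Suc by (simp add: power_two_power_eq_self power2_eq_square)
qed

lemma dickson_card_pred: "dickson (2 ^ n - 1) (x::'a) = x ^ 2 * abs_trace n (inverse x)"
proof -
  have "Suc (Suc (2 ^ n - 1)) = 2 ^ n + 1" "Suc (2 ^ n - 1) = 2 ^ n"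
    by simp_all
  then have "dickson (2 ^ n + 1) x = x * x + dickson (2 ^ n - 1) x"
    using dickson_Suc_Suc_char2[OF two_eq_zero, of "2 ^ n - 1" x] by (simp add: dickson_card)
  then have "dickson (2 ^ n - 1) x = dickson (2 ^ n + 1) x - x * x"
    by simp
  also have "\<dots> = x ^ 2 * abs_trace n (inverse x) + (x * x + x * x)"
    unfolding dickson_card_Suc diff_char2[OF two_eq_zero] by (simp add: algebra_simps power2_eq_square)
  finally show ?thesis
    by (simp add: add_self_char2[OF two_eq_zero])
qed

lemma dickson_period_trace_one:
  assumes "x \<in> trace_set n 1 \<union> {0::'a}"
  shows "dickson_period (2 ^ n + 1) x"
proof -
  have "x ^ 2 * (1 + abs_trace n (inverse x)) = 0"
    using assms two_eq_zero by (auto simp: trace_set_def)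
  then have "dickson (2 ^ n + 1) x = 0" unfolding dickson_card_Suc .
  then show ?thesis
    using dickson_Suc_Suc_char2[OF two_eq_zero, of "2 ^ n" x]
    by (simp add: dickson_period_def dickson_card)
qed

lemma dickson_period_trace_zero:
  assumes "x \<in> trace_set n 0 \<union> {0::'a}"
  shows "dickson_period (2 ^ n - 1) x"
proof -
  have "abs_trace n (inverse x) = 0" using assms by (auto simp: trace_set_def)
  moreover have "(1::nat) < 2 ^ n" using n_pos one_less_power[of "2::nat" n] by simp
  ultimately show ?thesis
    unfolding dickson_period_def dickson_card_pred by (simp add: dickson_card)
qed

lemma card_abs_trace_eq:
  "card {c::'a. abs_trace n c = 0} = 2 ^ (n - 1)" "card {c::'a. abs_trace n c = 1} = 2 ^ (n - 1)"
proof -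
  have "UNIV = {c::'a. abs_trace n c = 0} \<union> {c. abs_trace n c = 1}"
    using abs_trace_eq_0_or_1 by auto
  then have "CARD('a) = card ({c::'a. abs_trace n c = 0} \<union> {c. abs_trace n c = 1})"
    by (simp only:)
  also have "\<dots> = card {c::'a. abs_trace n c = 0} + card {c::'a. abs_trace n c = 1}"
    by (rule card_Un_disjoint) auto
  finally have "CARD('a) = card {c::'a. abs_trace n c = 0} + card {c::'a. abs_trace n c = 1}" .
  moreover have "CARD('a) = 2 ^ (n - 1) + 2 ^ (n - 1)"
    using card n_pos by (cases n) simp_all
  ultimately show "card {c::'a. abs_trace n c = 0} = 2 ^ (n - 1)"
    and "card {c::'a. abs_trace n c = 1} = 2 ^ (n - 1)"
    using card_abs_trace_eq_le[OF n_pos, where 'a='a and b=0]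
      card_abs_trace_eq_le[OF n_pos, where 'a='a and b=1] by linarith+
qed

lemma card_trace_set_zero: "card (trace_set n 0 \<union> {0::'a}) = 2 ^ (n - 1)"
proof -
  have "trace_set n 0 \<union> {0::'a} = {a. abs_trace n (inverse a) = 0}"
    by (auto simp: trace_set_def)
  then have "card (trace_set n 0 \<union> {0::'a}) = card {c::'a. abs_trace n c = 0}"
    using card_inverse_preimage by (simp only:)
  then show ?thesis by (simp only: card_abs_trace_eq)
qed

lemma card_trace_set_one: "card (trace_set n 1 :: 'a set) = 2 ^ (n - 1)"
proof -
  have "trace_set n 1 = {a::'a. abs_trace n (inverse a) = 1}"
    by (auto simp: trace_set_def)
  then have "card (trace_set n 1 :: 'a set) = card {c::'a. abs_trace n c = 1}"
    using card_inverse_preimage by (simp only:)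
  then show ?thesis by (simp only: card_abs_trace_eq)
qed

lemma card_trace_set_one_insert_zero: "card (trace_set n 1 \<union> {0::'a}) = 2 ^ (n - 1) + 1"
  using card_trace_set_one by (simp add: trace_set_def)

lemma two_mult_two_power_pred: "2 * 2 ^ (n - 1) = (2::nat) ^ n"
  using n_pos by (cases n) simp_all

lemma dickson_image_trace_one_eq_zero_iff:
  "(\<lambda>x. dickson k x) ` (trace_set n 1 :: 'a set) = {0} \<longleftrightarrow> (2 ^ n + 1) dvd k"
proof -
  have period: "\<forall>x\<in>trace_set n 1 \<union> {0::'a}. dickson_period (2 ^ n + 1) x"
    using dickson_period_trace_one by blast
  have card: "2 ^ n + 1 < 2 * card (trace_set n 1 \<union> {0::'a})"
    using card_trace_set_one_insert_zero two_mult_two_power_pred by linarith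
  have "trace_set n 1 \<noteq> ({} :: 'a set)"
    using card_trace_set_one by auto
  then have "(\<lambda>x. dickson k x) ` (trace_set n 1 :: 'a set) = {0} \<longleftrightarrow>
      (\<forall>x\<in>trace_set n 1 \<union> {0::'a}. dickson k x = 0)"
    by (rule dickson_image_eq_zero_iff[OF two_eq_zero])
  also have "\<dots> \<longleftrightarrow> (2 ^ n + 1) dvd k"
    using period card by (rule dickson_vanishes_on_iff[OF two_eq_zero])
  finally show ?thesis .
qed

lemma dickson_image_trace_zero_eq_zero_iff:
  assumes "2 < (2::nat) ^ n"
  shows "(\<lambda>x. dickson k x) ` (trace_set n 0 :: 'a set) = {0} \<longleftrightarrow> (2 ^ n - 1) dvd k"
proof -
  have period: "\<forall>x\<in>trace_set n 0 \<union> {0::'a}. dickson_period (2 ^ n - 1) x"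
    using dickson_period_trace_zero by blast
  have card: "1 < card (trace_set n 0 \<union> {0::'a})"
    "2 ^ n - 1 < 2 * card (trace_set n 0 \<union> {0::'a})"
    using card_trace_set_zero assms two_mult_two_power_pred by linarith+
  then have "trace_set n 0 \<noteq> ({} :: 'a set)"
    by auto
  then have "(\<lambda>x. dickson k x) ` (trace_set n 0 :: 'a set) = {0} \<longleftrightarrow>
      (\<forall>x\<in>trace_set n 0 \<union> {0::'a}. dickson k x = 0)"
    by (rule dickson_image_eq_zero_iff[OF two_eq_zero])
  also have "\<dots> \<longleftrightarrow> (2 ^ n - 1) dvd k"
    using period card(2) by (rule dickson_vanishes_on_iff[OF two_eq_zero])
  finally show ?thesis .
qed

lemma dickson_eq_square_trace_one_iff:
  "(\<forall>b\<in>trace_set n 1. dickson k b = (b::'a) ^ 2) \<longleftrightarrow>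
    [int k = 2] (mod int (2 ^ n) + 1) \<or> [int k = - 2] (mod int (2 ^ n) + 1)"
proof -
  have period: "\<forall>x\<in>trace_set n 1 \<union> {0::'a}. dickson_period (2 ^ n + 1) x"
    using dickson_period_trace_one by blast
  have card: "2 ^ n + 1 < 2 * card (trace_set n 1 \<union> {0::'a})" and "3 \<le> (2::nat) ^ n + 1"
    using n_pos one_less_power[of "2::nat" n] card_trace_set_one_insert_zero two_mult_two_power_pred
    by linarith+
  have "(\<forall>b\<in>trace_set n 1. dickson k b = (b::'a) ^ 2) \<longleftrightarrow>
      (\<forall>x\<in>trace_set n 1 \<union> {0::'a}. dickson k x = x ^ 2)"
    by (rule dickson_eq_square_insert_zero_iff[OF two_eq_zero])
  also have "\<dots> \<longleftrightarrow> [int k = 2] (mod int (2 ^ n + 1)) \<or> [int k = - 2] (mod int (2 ^ n + 1))"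
    using period card \<open>3 \<le> 2 ^ n + 1\<close> by (rule dickson_eq_square_on_iff[OF two_eq_zero])
  finally show ?thesis by (simp add: add.commute)
qed

lemma dickson_eq_square_trace_zero_iff:
  assumes "2 < (2::nat) ^ n"
  shows "(\<forall>a\<in>trace_set n 0. dickson k a = (a::'a) ^ 2) \<longleftrightarrow>
    [int k = 2] (mod int (2 ^ n) - 1) \<or> [int k = - 2] (mod int (2 ^ n) - 1)"
proof -
  have period: "\<forall>x\<in>trace_set n 0 \<union> {0::'a}. dickson_period (2 ^ n - 1) x"
    using dickson_period_trace_zero by blast
  have "(2::nat) ^ n \<noteq> 3"
  proof
    assume "(2::nat) ^ n = 3"
    with two_mult_two_power_pred show False by presburger
  qed
  then have card: "2 ^ n - 1 < 2 * card (trace_set n 0 \<union> {0::'a})" and "3 \<le> (2::nat) ^ n - 1"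
    using assms card_trace_set_zero two_mult_two_power_pred by linarith+
  have "(\<forall>a\<in>trace_set n 0. dickson k a = (a::'a) ^ 2) \<longleftrightarrow>
      (\<forall>x\<in>trace_set n 0 \<union> {0::'a}. dickson k x = x ^ 2)"
    by (rule dickson_eq_square_insert_zero_iff[OF two_eq_zero])
  also have "\<dots> \<longleftrightarrow> [int k = 2] (mod int (2 ^ n - 1)) \<or> [int k = - 2] (mod int (2 ^ n - 1))"
    using period card \<open>3 \<le> 2 ^ n - 1\<close> by (rule dickson_eq_square_on_iff[OF two_eq_zero])
  finally show ?thesis
    using assms by (simp add: of_nat_diff)
qed

lemma dickson_power_card_trace_zero:
  assumes "x \<in> trace_set n 0 \<union> {0::'a}"
  shows "dickson ((2 ^ n) ^ e - 1) x = 0" and "dickson ((2 ^ n) ^ e + 1) x = x ^ 2"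
proof -
  note period = dickson_period_trace_zero[OF assms]
  show "dickson ((2 ^ n) ^ e - 1) x = 0"
    by (rule dickson_period_cong_zero[OF two_eq_zero period cong_power_minus_one_mod_pred]) simp
  show "dickson ((2 ^ n) ^ e + 1) x = x ^ 2"
    by (rule dickson_period_cong_two[OF two_eq_zero period disjI1[OF cong_power_plus_one_mod_pred]])
      simp
qed

lemma dickson_power_card_trace_one:
  assumes "x \<in> trace_set n 1 \<union> {0::'a}"
  shows "dickson ((2 ^ n) ^ e - 1) x = (if even e then 0 else x ^ 2)"
    and "dickson ((2 ^ n) ^ e + 1) x = (if even e then x ^ 2 else 0)"
proof -
  note period = dickson_period_trace_one[OF assms]
  have minus: "[int ((2 ^ n) ^ e - 1) = (if even e then 0 else - 2)] (mod int (2 ^ n + 1))"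
    by (rule cong_power_minus_one_mod_Suc) simp
  have plus: "[int ((2 ^ n) ^ e + 1) = (if even e then 2 else 0)] (mod int (2 ^ n + 1))"
    by (rule cong_power_plus_one_mod_Suc)
  show "dickson ((2 ^ n) ^ e - 1) x = (if even e then 0 else x ^ 2)"
    using minus dickson_period_cong_zero[OF two_eq_zero period]
      dickson_period_cong_two[OF two_eq_zero period] by (cases "even e") simp_all
  show "dickson ((2 ^ n) ^ e + 1) x = (if even e then x ^ 2 else 0)"
    using plus dickson_period_cong_zero[OF two_eq_zero period]
      dickson_period_cong_two[OF two_eq_zero period] by (cases "even e") simp_all
qed

lemma trace_set_zero_or_one: "(x::'a) \<in> trace_set n 0 \<union> {0} \<or> x \<in> trace_set n 1"
  using abs_trace_eq_0_or_1[of "inverse x"] by (auto simp: trace_set_def)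

end

theorem proposition3p3:
  fixes n :: nat
  assumes card: "CARD('a) = 2 ^ n"
  defines "q \<equiv> CARD('a)"
  defines "T0 \<equiv> (trace_set n 0 :: 'a::{field,finite} set)"
  defines "T1 \<equiv> (trace_set n 1 :: 'a set)"
  shows
    "(\<forall>k. ((\<lambda>x. dickson k x) ` T1 = {0} \<longleftrightarrow> (q + 1) dvd k))
   \<and> (q > 2 \<longrightarrow> (\<forall>k. ((\<lambda>x. dickson k x) ` T0 = {0} \<longleftrightarrow> (q - 1) dvd k)))
   \<and> (\<forall>k. ((\<forall>b\<in>T1. dickson k b = b ^ 2) \<longleftrightarrow>
          ([int k = 2] (mod int q + 1) \<or> [int k = - 2] (mod int q + 1))))
   \<and> (q > 2 \<longrightarrow> (\<forall>k. ((\<forall>a\<in>T0. dickson k a = a ^ 2) \<longleftrightarrow>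
          ([int k = 2] (mod int q - 1) \<or> [int k = - 2] (mod int q - 1)))))
   \<and> (\<forall>e::nat. even e \<longrightarrow>
          (\<forall>a::'a. dickson (q ^ e - 1) a = 0 \<and> dickson (q ^ e + 1) a = a ^ 2))
   \<and> (\<forall>e::nat. odd e \<longrightarrow>
          (\<forall>a\<in>T0 \<union> {0}. dickson (q ^ e - 1) a = 0 \<and> dickson (q ^ e + 1) a = a ^ 2)
        \<and> (\<forall>a\<in>T1. dickson (q ^ e - 1) a = a ^ 2 \<and> dickson (q ^ e + 1) a = 0))"
proof -
  have q: "q = 2 ^ n" using card by (simp add: q_def)
  have "dickson ((2 ^ n) ^ e - 1) a = 0 \<and> dickson ((2 ^ n) ^ e + 1) a = a ^ 2"
    if "even e" for e and a :: 'a
    using trace_set_zero_or_one[OF card, of a] that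
      dickson_power_card_trace_zero[OF card] dickson_power_card_trace_one[OF card] by auto
  then show ?thesis
    unfolding q T0_def T1_def
    using dickson_image_trace_one_eq_zero_iff[OF card] dickson_image_trace_zero_eq_zero_iff[OF card]
      dickson_eq_square_trace_one_iff[OF card] dickson_eq_square_trace_zero_iff[OF card]
      dickson_power_card_trace_zero[OF card] dickson_power_card_trace_one[OF card]
    by auto
qed

end
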